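(* Let $J\subseteq S$. For any $w\in\mathfrak{S}_n^J$ there is a unique minimal $(J,132)$-avoiding permutation $w'\in\mathfrak{S}_n^J$ with $w\le_S w'$; that is, $w'$ is $(J,132)$-avoiding, $w\le_S w'$, and $w'\le_S v$ for every $(J,132)$-avoiding $v\in\mathfrak{S}_n^J$ with $w\le_S v$.
   Context: $\mathfrak{S}_n$ is the symmetric group on $[n]$, $s_i=(i,i+1)$, $S=\{s_1,\dots,s_{n-1}\}$, one-line notation $w=w_1\cdots w_n$, $\mathrm{inv}(w)=\{(i,j):i<j,\ w_i>w_j\}$, weak order $u\le_S v\iff\mathrm{inv}(u)\subseteq\mathrm{inv}(v)$. For $J\subseteq S$, $\mathfrak{S}_n^J$ is the set of $w$ with $w_i<w_{i+1}$ whenever $s_i\in J$. Writing $J=S\setminus\{s_{j_1},\dots,s_{j_r}\}$ with $j_1<\dots<j_r$, the $J$-regions are $\{1,\dots,j_1\},\{j_1+1,\dots,j_2\},\dots,\{j_r+1,\dots,n\}$. An element $w\in\mathfrak{S}_n^J$ has a $(J,132)$-pattern if there are indices $i<j<k$ in pairwise different $J$-regions with $w_i<w_k<w_j$ and $w_k=w_i+1$; otherwise it is $(J,132)$-avoiding. *)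

theory Defs
  imports "HOL-Combinatorics.Permutations"
begin

text \<open>Permutations of [n] are functions w :: nat => nat with w permutes {1..n};
 w i is the i-th letter of the one-line notation. A subset J of S is represented
 by the set of indices i (with 1 <= i < n) such that s_i is in J.\<close>

definition inversions :: "nat \<Rightarrow> (nat \<Rightarrow> nat) \<Rightarrow> (nat \<times> nat) set" where
  "inversions n w = {(i, j). 1 \<le> i \<and> i < j \<and> j \<le> n \<and> w i > w j}"

definition weak_le :: "nat \<Rightarrow> (nat \<Rightarrow> nat) \<Rightarrow> (nat \<Rightarrow> nat) \<Rightarrow> bool" where
  "weak_le n u v \<longleftrightarrow> inversions n u \<subseteq> inversions n v"

definition parabolic :: "nat \<Rightarrow> nat set \<Rightarrow> (nat \<Rightarrow> nat) set" where
  "parabolic n J = {w. w permutes {1..n} \<and> (\<forall>i\<in>J. w i < w (i + 1))}"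

definition same_region :: "nat set \<Rightarrow> nat \<Rightarrow> nat \<Rightarrow> bool" where
  "same_region J i j \<longleftrightarrow> (\<forall>k. i \<le> k \<and> k < j \<longrightarrow> k \<in> J)"

definition has_J132 :: "nat \<Rightarrow> nat set \<Rightarrow> (nat \<Rightarrow> nat) \<Rightarrow> bool" where
  "has_J132 n J w \<longleftrightarrow> (\<exists>i j k. 1 \<le> i \<and> i < j \<and> j < k \<and> k \<le> n \<and>
      \<not> same_region J i j \<and> \<not> same_region J j k \<and> \<not> same_region J i k \<and>
      w i < w k \<and> w k < w j \<and> w k = w i + 1)"

definition J132_avoiding :: "nat \<Rightarrow> nat set \<Rightarrow> (nat \<Rightarrow> nat) \<Rightarrow> bool" where
  "J132_avoiding n J w \<longleftrightarrow> \<not> has_J132 n J w"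

end

theory Submission
  imports Defs
begin

text \<open>If w has a (J,132)-pattern at positions i < j < k, swapping the consecutive values
  w i and w k = w i + 1 adds exactly the inversion (i,k) and stays in the parabolic quotient.
  Every (J,132)-avoiding v above w must already contain (i,k): otherwise the values between
  v i and v k all sit outside the interval (i,k), and a consecutive pair of values crossing
  position j forms a (J,132)-pattern in v. Iterating the swap terminates in the least avoiding
  element above w; uniqueness is antisymmetry of the weak order, since a permutation is
  determined by its inversion set.\<close>

definition least_avoiding_above :: "nat \<Rightarrow> nat set \<Rightarrow> (nat \<Rightarrow> nat) \<Rightarrow> (nat \<Rightarrow> nat) \<Rightarrow> bool" where
  "least_avoiding_above n J w w' \<longleftrightarrow>
     w' \<in> parabolic n J \<and> J132_avoiding n J w' \<and> weak_le n w w' \<and>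
     (\<forall>v. v \<in> parabolic n J \<and> J132_avoiding n J v \<and> weak_le n w v \<longrightarrow> weak_le n w' v)"

lemma not_same_region_mono:
  assumes "a \<le> b" "c \<le> d" "\<not> same_region J b c"
  shows "\<not> same_region J a d"
  using assms unfolding same_region_def by (metis le_trans less_le_trans)

lemma weak_le_inversionD:
  assumes "weak_le n w v" "1 \<le> s" "s < t" "t \<le> n" "w t < w s"
  shows "v t < v s"
  using assms unfolding weak_le_def inversions_def by blast

lemma permutes_value_eq_card:
  assumes u: "u permutes {1..n}" and s: "s \<in> {1..n}"
  shows "u s = card {t \<in> {1..n}. u t < u s} + 1"
proof -
  have "u ` {t \<in> {1..n}. u t < u s} = {x \<in> u ` {1..n}. x < u s}" by auto
  also have "\<dots> = {1..<u s}" using permutes_image[OF u] permutes_in_image[OF u, of s] s by auto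
  finally have "card {t \<in> {1..n}. u t < u s} = card {1..<u s}"
    using card_image inj_on_subset[OF permutes_inj_on[OF u]] by (metis (no_types, lifting) subsetI)
  moreover have "1 \<le> u s" using permutes_in_image[OF u, of s] s by auto
  ultimately show ?thesis by simp
qed

lemma permutes_less_iff_inversions:
  assumes u: "u permutes {1..n}" and "s \<in> {1..n}" "t \<in> {1..n}"
  shows "u t < u s \<longleftrightarrow> (t < s \<and> (t, s) \<notin> inversions n u) \<or> (s < t \<and> (s, t) \<in> inversions n u)"
proof -
  have "t \<noteq> s \<Longrightarrow> u t \<noteq> u s" using permutes_inj[OF u] unfolding inj_def by blast
  then show ?thesis using assms unfolding inversions_def by (cases "t < s"; cases "s < t") auto
qed

lemma permutes_eq_if_inversions_eq:
  assumes u: "u permutes {1..n}" and v: "v permutes {1..n}"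
    and eq: "inversions n u = inversions n v"
  shows "u = v"
proof
  fix s
  show "u s = v s"
  proof (cases "s \<in> {1..n}")
    case True
    have "{t \<in> {1..n}. u t < u s} = {t \<in> {1..n}. v t < v s}"
      using permutes_less_iff_inversions[OF u True] permutes_less_iff_inversions[OF v True] eq
      by blast
    then show ?thesis
      using permutes_value_eq_card[OF u True] permutes_value_eq_card[OF v True] by simp
  next
    case False
    then show ?thesis using permutes_not_in[OF u] permutes_not_in[OF v] by simp
  qed
qed

lemma weak_le_antisym:
  assumes "u permutes {1..n}" "v permutes {1..n}" "weak_le n u v" "weak_le n v u"
  shows "u = v"
  using assms permutes_eq_if_inversions_eq unfolding weak_le_def by blast

lemma transpose_Suc_less_iff:
  fixes a x y :: nat
  assumes "x \<noteq> y" "\<not> (x = a \<and> y = a + 1)" "\<not> (x = a + 1 \<and> y = a)"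
  shows "transpose a (a + 1) x < transpose a (a + 1) y \<longleftrightarrow> x < y"
  using assms by (simp add: transpose_def) linarith

lemma swap_values_less_iff:
  fixes w :: "nat \<Rightarrow> nat"
  assumes w: "w permutes {1..n}" and "w k = w i + 1"
    and "s \<noteq> t" "\<not> (s = i \<and> t = k)" "\<not> (s = k \<and> t = i)"
  shows "(transpose (w i) (w i + 1) \<circ> w) s < (transpose (w i) (w i + 1) \<circ> w) t \<longleftrightarrow> w s < w t"
proof -
  have inj: "w x = w y \<longleftrightarrow> x = y" for x y using permutes_inj[OF w] unfolding inj_def by blast
  have "w s \<noteq> w t" "\<not> (w s = w i \<and> w t = w i + 1)" "\<not> (w s = w i + 1 \<and> w t = w i)"
    using assms(2-) by (metis inj)+
  then show ?thesis using transpose_Suc_less_iff[of "w s" "w t" "w i"] by simp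
qed

lemma swap_values_parabolic:
  assumes w: "w \<in> parabolic n J" and "i \<in> {1..n}" "k \<in> {1..n}"
    and "w k = w i + 1" and "\<not> same_region J i k"
  shows "transpose (w i) (w i + 1) \<circ> w \<in> parabolic n J"
proof -
  have wp: "w permutes {1..n}" using w unfolding parabolic_def by simp
  have "w i \<in> {1..n}" "w i + 1 \<in> {1..n}"
    using permutes_in_image[OF wp] assms(2-4) by metis+
  then have "transpose (w i) (w i + 1) \<circ> w permutes {1..n}"
    by (intro permutes_compose[OF wp permutes_swap_id]) auto
  moreover have "(transpose (w i) (w i + 1) \<circ> w) m < (transpose (w i) (w i + 1) \<circ> w) (m + 1)"
    if "m \<in> J" for m
  proof -
    have "same_region J m (m + 1)"
      using that unfolding same_region_def by (metis le_antisym less_Suc_eq_le Suc_eq_plus1)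
    \<comment> \<open>for k \<le> i the range of positions is empty, so same_region J i k holds vacuously\<close>
    moreover have "i < k" using assms(5) unfolding same_region_def by (meson leI le_less_trans)
    ultimately have "\<not> (m = i \<and> m + 1 = k)" "\<not> (m = k \<and> m + 1 = i)" using assms(5) by auto
    then have "(transpose (w i) (w i + 1) \<circ> w) m < (transpose (w i) (w i + 1) \<circ> w) (m + 1)
        \<longleftrightarrow> w m < w (m + 1)"
      by (intro swap_values_less_iff[OF wp assms(4)]) auto
    then show ?thesis using that w unfolding parabolic_def by blast
  qed
  ultimately show ?thesis unfolding parabolic_def by simp
qed

lemma inversions_swap_values:
  assumes w: "w permutes {1..n}" and "1 \<le> i" "i < k" "k \<le> n" "w k = w i + 1"
  shows "inversions n (transpose (w i) (w i + 1) \<circ> w) = insert (i, k) (inversions n w)"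
proof (rule set_eqI, clarify)
  fix s t
  show "(s, t) \<in> inversions n (transpose (w i) (w i + 1) \<circ> w) \<longleftrightarrow>
      (s, t) \<in> insert (i, k) (inversions n w)"
  proof (cases "s = i \<and> t = k")
    case True
    then show ?thesis using assms unfolding inversions_def by simp
  next
    case False
    then show ?thesis
      using assms(3) swap_values_less_iff[OF w assms(5), of t s] unfolding inversions_def by auto
  qed
qed

lemma consecutive_crossing:
  fixes p :: "nat \<Rightarrow> nat"
  assumes "a \<le> b" "p a < j" "j \<le> p b"
  shows "\<exists>c. a \<le> c \<and> c < b \<and> p c < j \<and> j \<le> p (c + 1)"
  using assms
proof (induction b)
  case 0
  then show ?case by simp
next
  case (Suc b)
  show ?case
  proof (cases "a \<le> b \<and> j \<le> p b")
    case True
    then show ?thesis using Suc.IH Suc.prems(2) less_SucI by blast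
  next
    case False
    then have "p b < j"
      using Suc.prems by (metis le_Suc_eq not_le)
    then show ?thesis using Suc.prems False by (metis Suc_eq_plus1 le_Suc_eq lessI not_le)
  qed
qed

lemma weak_le_keeps_gap:
  assumes w: "w permutes {1..n}" and le: "weak_le n w v"
    and "1 \<le> i" "i < m" "m < k" "k \<le> n" "w k = w i + 1"
  shows "v m < v i \<or> v k < v m"
proof -
  have "w m \<noteq> w i" "w m \<noteq> w k" using permutes_inj[OF w] assms(4,5) by (metis inj_eq less_irrefl)+
  then have "w m < w i \<or> w k < w m" using assms(7) by linarith
  then show ?thesis using weak_le_inversionD[OF le] assms(3-6) by fastforce
qed

lemma avoiding_above_pattern_inverts:
  assumes w: "w permutes {1..n}" and v: "v permutes {1..n}"
    and av: "J132_avoiding n J v" and le: "weak_le n w v"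
    and p: "1 \<le> i" "i < j" "j < k" "k \<le> n" "\<not> same_region J i j" "\<not> same_region J j k"
      "w k < w j" "w k = w i + 1"
  shows "v k < v i"
proof (rule ccontr)
  assume "\<not> v k < v i"
  moreover have "v i \<noteq> v k" using permutes_inj[OF v] p(2,3) by (metis inj_eq less_irrefl less_trans)
  ultimately have ik: "v i < v k" by simp
  have jk: "v k < v j" using weak_le_inversionD[OF le] p by simp
  have gap: "\<not> (v i < v m \<and> v m < v k)" if "i < m" "m < k" for m
    using weak_le_keeps_gap[OF w le p(1) that p(4,8)] by linarith
  obtain c where c: "v i \<le> c" "c < v k" "inv v c < j" "j \<le> inv v (c + 1)"
    using consecutive_crossing[of "v i" "v k" "inv v" j] ik p(2,3)
    by (auto simp: permutes_inverses[OF v])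
  define s t where "s = inv v c" and "t = inv v (c + 1)"
  have vst: "v s = c" "v t = c + 1" unfolding s_def t_def by (simp_all add: permutes_inverses[OF v])
  have "c \<in> {1..n}" "c + 1 \<in> {1..n}"
    using c(1,2) permutes_in_image[OF v, of i] permutes_in_image[OF v, of k] p(1-4) by auto
  then have st_range: "s \<in> {1..n}" "t \<in> {1..n}"
    unfolding s_def t_def using permutes_in_image[OF permutes_inv[OF v]] by blast+
  have "t \<noteq> j" using jk c(2) vst(2) by auto
  then have jt: "j < t" using c(4) unfolding t_def by simp
  have sj: "\<not> same_region J s j"
  proof (cases "s \<le> i")
    case True
    show ?thesis using not_same_region_mono[OF True order_refl p(5)] .
  next
    case False
    then have "v s \<noteq> v i" using permutes_inj[OF v] by (metis inj_eq order_refl)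
    then have False using gap[of s] False c(1-3) p(3) vst(1) unfolding s_def by linarith
    then show ?thesis ..
  qed
  have jt_region: "\<not> same_region J j t"
  proof (cases "k \<le> t")
    case True
    show ?thesis using not_same_region_mono[OF order_refl True p(6)] .
  next
    case False
    then have "v t \<noteq> v k" using permutes_inj[OF v] by (metis inj_eq order_refl)
    then have False using gap[of t] False c(1,2) jt p(2) vst(2) by linarith
    then show ?thesis ..
  qed
  have "has_J132 n J v"
    unfolding has_J132_def
  proof (rule exI[of _ s], rule exI[of _ j], rule exI[of _ t], intro conjI)
    show "\<not> same_region J s t" using not_same_region_mono[OF order_refl _ sj] jt by simp
  qed (use st_range c(3) jt sj jt_region vst jk c(2) in \<open>auto simp: s_def\<close>)
  then show False using av unfolding J132_avoiding_def by simp
qed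

lemma least_avoiding_above_swap:
  assumes w: "w \<in> parabolic n J"
    and p: "1 \<le> i" "i < j" "j < k" "k \<le> n" "\<not> same_region J i j" "\<not> same_region J j k"
      "w k < w j" "w k = w i + 1"
    and least: "least_avoiding_above n J (transpose (w i) (w i + 1) \<circ> w) w'"
  shows "least_avoiding_above n J w w'"
proof -
  have wp: "w permutes {1..n}" using w unfolding parabolic_def by simp
  have swap: "inversions n (transpose (w i) (w i + 1) \<circ> w) = insert (i, k) (inversions n w)"
    using inversions_swap_values[OF wp p(1)] p by simp
  have "weak_le n (transpose (w i) (w i + 1) \<circ> w) v"
    if "v \<in> parabolic n J" "J132_avoiding n J v" "weak_le n w v" for v
  proof -
    have "v k < v i"
      using avoiding_above_pattern_inverts[OF wp _ that(2,3) p] that(1) unfolding parabolic_def by simp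
    then have "(i, k) \<in> inversions n v" using p unfolding inversions_def by simp
    then show ?thesis using that(3) unfolding weak_le_def swap by blast
  qed
  then show ?thesis using least swap unfolding least_avoiding_above_def weak_le_def by blast
qed

lemma least_avoiding_above_exists:
  assumes "w \<in> parabolic n J"
  shows "\<exists>w'. least_avoiding_above n J w w'"
  using assms
proof (induction "card ({1..n} \<times> {1..n} - inversions n w)" arbitrary: w rule: less_induct)
  case less
  show ?case
  proof (cases "J132_avoiding n J w")
    case True
    then show ?thesis using less.prems unfolding least_avoiding_above_def weak_le_def by blast
  next
    case False
    then obtain i j k where p: "1 \<le> i" "i < j" "j < k" "k \<le> n"
      "\<not> same_region J i j" "\<not> same_region J j k" "w k < w j" "w k = w i + 1"
      unfolding J132_avoiding_def has_J132_def by blast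
    define w1 where "w1 = transpose (w i) (w i + 1) \<circ> w"
    have wp: "w permutes {1..n}" using less.prems unfolding parabolic_def by simp
    have "w1 \<in> parabolic n J"
      unfolding w1_def using p not_same_region_mono[of i i j k J]
      by (intro swap_values_parabolic[OF less.prems, of i k]) auto
    moreover have "card ({1..n} \<times> {1..n} - inversions n w1) < card ({1..n} \<times> {1..n} - inversions n w)"
    proof -
      have "(i, k) \<notin> inversions n w" using p unfolding inversions_def by simp
      moreover have "inversions n w1 = insert (i, k) (inversions n w)"
        unfolding w1_def using inversions_swap_values[OF wp p(1)] p by simp
      ultimately show ?thesis using p by (intro psubset_card_mono) auto
    qed
    ultimately obtain w' where "least_avoiding_above n J w1 w'" using less.hyps by blast
    then show ?thesis using least_avoiding_above_swap[OF less.prems p] unfolding w1_def by blast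
  qed
qed

lemma least_avoiding_above_unique:
  assumes u: "least_avoiding_above n J w u" and v: "least_avoiding_above n J w v"
  shows "u = v"
proof (rule weak_le_antisym)
  show "u permutes {1..n}" "v permutes {1..n}"
    using u v unfolding least_avoiding_above_def parabolic_def by blast+
  show "weak_le n u v" "weak_le n v u"
    using u v unfolding least_avoiding_above_def by blast+
qed

theorem lemma3p14:
  fixes n :: nat and J :: "nat set" and w :: "nat \<Rightarrow> nat"
  assumes "J \<subseteq> {1..<n}"
    and "w \<in> parabolic n J"
  shows "\<exists>!w'. w' \<in> parabolic n J \<and> J132_avoiding n J w' \<and> weak_le n w w' \<and>
           (\<forall>v. v \<in> parabolic n J \<and> J132_avoiding n J v \<and> weak_le n w v \<longrightarrow> weak_le n w' v)"
proof -
  have "\<exists>!w'. least_avoiding_above n J w w'"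
    using least_avoiding_above_exists[OF assms(2)] least_avoiding_above_unique by blast
  then show ?thesis unfolding least_avoiding_above_def .
qed

end
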